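(* Let $p\in\mathbb{D}\setminus\{0\}$ and let $\alpha_p(z)=\frac{p-z}{1-\overline{p}z}$. Consider $C_{\alpha_p}$ acting on $H^2(\mathbb{D})$ and its Hilbert space adjoint $C_{\alpha_p}^*$. Then: (i) for every $w=-\frac{p}{|p|}r$ with $0<r<1$, $$\frac{\|C_{\alpha_p}\kappa_w\|}{\|\kappa_w\|}\le\frac{\|C_{\alpha_p}^*\kappa_{-w}\|}{\|\kappa_{-w}\|};$$ (ii) for every $z\in\mathbb{D}$, $$\frac{\|C_{\alpha_p}^*\kappa_z\|}{\|\kappa_z\|}\le\frac{\|C_{\alpha_p}\kappa_{\alpha_p(z)}\|}{\|\kappa_{\alpha_p(z)}\|}.$$
   Context: $\mathbb{D}$ is the open unit disc; $H^2(\mathbb{D})$ is the Hardy space of holomorphic $f(z)=\sum a_nz^n$ with $\|f\|^2=\sum|a_n|^2<\infty$. For $w\in\mathbb{D}$, $\kappa_w(z)=\frac{1}{1-\overline{w}z}$ is the reproducing kernel of $H^2(\mathbb{D})$ at $w$, so $f(w)=\langle f,\kappa_w\rangle$ and $\|\kappa_w\|^2=(1-|w|^2)^{-1}$. $C_\varphi f=f\circ\varphi$. *)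

theory Defs
  imports "HOL-Complex_Analysis.Complex_Analysis"
begin

text \<open>The Hardy space H^2 of the unit disc, realised by Taylor coefficient sequences:
  f(z) = sum a_n z^n with sum |a_n|^2 finite.\<close>

definition H2 :: "(nat \<Rightarrow> complex) set" where
  "H2 = {a. summable (\<lambda>n. (cmod (a n))\<^sup>2)}"

definition h2_norm :: "(nat \<Rightarrow> complex) \<Rightarrow> real" where
  "h2_norm a = sqrt (\<Sum>n. (cmod (a n))\<^sup>2)"

definition h2_inner :: "(nat \<Rightarrow> complex) \<Rightarrow> (nat \<Rightarrow> complex) \<Rightarrow> complex" where
  "h2_inner a b = (\<Sum>n. a n * cnj (b n))"

definition h2_eval :: "(nat \<Rightarrow> complex) \<Rightarrow> complex \<Rightarrow> complex" where
  "h2_eval a z = (\<Sum>n. a n * z ^ n)"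

definition taylor_coeffs :: "(complex \<Rightarrow> complex) \<Rightarrow> nat \<Rightarrow> complex" where
  "taylor_coeffs g = (\<lambda>n. (deriv ^^ n) g 0 / of_nat (fact n))"

text \<open>Reproducing kernel kappa_w(z) = 1/(1 - conj(w) z) = sum conj(w)^n z^n.\<close>
definition kernel :: "complex \<Rightarrow> nat \<Rightarrow> complex" where
  "kernel w = (\<lambda>n. (cnj w) ^ n)"

definition comp_op :: "(complex \<Rightarrow> complex) \<Rightarrow> (nat \<Rightarrow> complex) \<Rightarrow> nat \<Rightarrow> complex" where
  "comp_op \<phi> a = taylor_coeffs (\<lambda>z. h2_eval a (\<phi> z))"

definition h2_adjoint :: "((nat \<Rightarrow> complex) \<Rightarrow> nat \<Rightarrow> complex) \<Rightarrow> (nat \<Rightarrow> complex) \<Rightarrow> nat \<Rightarrow> complex" where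
  "h2_adjoint T g = (THE h. h \<in> H2 \<and> (\<forall>f\<in>H2. h2_inner (T f) g = h2_inner f h))"

definition alpha :: "complex \<Rightarrow> complex \<Rightarrow> complex" where
  "alpha p z = (p - z) / (1 - cnj p * z)"

end

theory Submission
  imports Defs
begin

text \<open>
  The adjoint of a composition operator sends reproducing kernels to kernels,
  \<open>C\<^sub>\<phi>\<^sup>* \<kappa>\<^sub>z = \<kappa>\<^bsub>\<phi> z\<^esub>\<close>. With \<open>\<parallel>\<kappa>\<^sub>w\<parallel>\<^sup>2 = 1 / (1 - |w|\<^sup>2)\<close> and the Moebius identity
  \<open>|1 - cnj p * z|\<^sup>2 - |p - z|\<^sup>2 = (1 - |p|\<^sup>2) (1 - |z|\<^sup>2)\<close>, the squared adjoint ratio at \<open>z\<close>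
  is \<open>|1 - cnj p * z|\<^sup>2 / (1 - |p|\<^sup>2)\<close>. On the other side, \<open>C\<^sub>\<alpha> \<kappa>\<^sub>w = 1 / (1 - cnj w * \<alpha>\<^sub>p)\<close>
  is rational with a single simple pole, at \<open>1 / c\<close> for \<open>c = cnj (\<alpha>\<^sub>p w)\<close>; its Taylor
  coefficients are geometric from index 1 on, and summing their squares gives the squared ratio
  \<open>(1 - |p|\<^sup>2 |w|\<^sup>2) / |1 - cnj p * w|\<^sup>2\<close>. With both closed forms, (ii) (where \<open>w = \<alpha>\<^sub>p z\<close>)
  becomes \<open>|1 - cnj p * z|\<^sup>2 \<le> |1 - cnj p * z|\<^sup>2 + |p|\<^sup>2 (1 - |z|\<^sup>2)\<close>, and (i) (where
  \<open>cnj p * w = - |p| r\<close> is real) becomes \<open>1 - |p|\<^sup>2 \<le> 1 - |p|\<^sup>2 r\<^sup>2\<close>.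
\<close>

lemma moebius_norm_identity:
  "cmod (1 - cnj p * z)^2 - cmod (p - z)^2 = (1 - cmod p^2) * (1 - cmod z^2)"
  by (simp only: cmod_power2) (simp add: power2_eq_square algebra_simps)

lemma norm_cnj_mult_less_1: "cmod p < 1 \<Longrightarrow> cmod z < 1 \<Longrightarrow> cmod (cnj p * z) < 1"
  using mult_strict_mono[of "cmod p" 1 "cmod z" 1] by (simp add: norm_mult)

lemma one_minus_cnj_mult_nonzero: "cmod p < 1 \<Longrightarrow> cmod z < 1 \<Longrightarrow> 1 - cnj p * z \<noteq> 0"
  using norm_cnj_mult_less_1 by fastforce

lemma one_minus_norm_alpha_sq:
  assumes "cmod p < 1" "cmod z < 1"
  shows "1 - cmod (alpha p z)^2 = (1 - cmod p^2) * (1 - cmod z^2) / cmod (1 - cnj p * z)^2"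
proof -
  have "cmod (1 - cnj p * z) \<noteq> 0"
    using one_minus_cnj_mult_nonzero[OF assms] by simp
  then show ?thesis
    using moebius_norm_identity[of p z]
    by (simp add: alpha_def norm_divide power_divide field_simps)
qed

lemma norm_alpha_less_1:
  assumes "cmod p < 1" "cmod z < 1"
  shows "cmod (alpha p z) < 1"
proof -
  have "0 < (1 - cmod p^2) * (1 - cmod z^2) / cmod (1 - cnj p * z)^2"
    using assms one_minus_cnj_mult_nonzero[OF assms] by (simp add: abs_square_less_1)
  then have "cmod (alpha p z)^2 < 1"
    using one_minus_norm_alpha_sq[OF assms] by linarith
  then show ?thesis
    by (simp add: abs_square_less_1)
qed

lemma alpha_maps_disc: "cmod p < 1 \<Longrightarrow> alpha p ` ball 0 1 \<subseteq> ball 0 1"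
  using norm_alpha_less_1 by auto

lemma alpha_holomorphic: "cmod p < 1 \<Longrightarrow> alpha p holomorphic_on ball 0 1"
  unfolding alpha_def[abs_def]
  by (intro holomorphic_intros) (use one_minus_cnj_mult_nonzero in auto)

lemma one_minus_cnj_mult_alpha:
  assumes "cmod p < 1" "cmod z < 1"
  shows "1 - cnj p * alpha p z = of_real (1 - cmod p^2) / (1 - cnj p * z)"
proof -
  have "cnj p * p = of_real (cmod p^2)"
    using complex_norm_square[of p] by (simp add: mult.commute)
  then show ?thesis
    using one_minus_cnj_mult_nonzero[OF assms]
    by (simp add: alpha_def field_simps)
qed

lemma kernel_norm_sq_sums:
  "cmod w < 1 \<Longrightarrow> (\<lambda>n. (cmod (kernel w n))\<^sup>2) sums (1 / (1 - cmod w ^ 2))"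
  using geometric_sums[of "(cmod w)^2"]
  by (simp add: abs_square_less_1 kernel_def norm_power power_mult[symmetric] mult.commute)

lemma kernel_in_H2: "cmod w < 1 \<Longrightarrow> kernel w \<in> H2"
  using kernel_norm_sq_sums by (auto simp: H2_def sums_iff)

lemma h2_norm_kernel: "cmod w < 1 \<Longrightarrow> h2_norm (kernel w) = sqrt (1 / (1 - cmod w ^ 2))"
  using kernel_norm_sq_sums by (simp add: h2_norm_def sums_iff)

lemma h2_inner_kernel: "h2_inner a (kernel z) = h2_eval a z"
  by (simp add: h2_inner_def h2_eval_def kernel_def)

lemma H2_summable_power_series:
  assumes "a \<in> H2" "cmod z < 1"
  shows "summable (\<lambda>n. a n * z ^ n)"
proof (rule summable_comparison_test')
  have "summable (\<lambda>n. (cmod (a n))\<^sup>2)"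
    using assms by (simp add: H2_def)
  moreover have "summable (\<lambda>n. ((cmod z)^2)^n)"
    using assms by (simp add: abs_square_less_1)
  ultimately show "summable (\<lambda>n. ((cmod (a n))\<^sup>2 + ((cmod z)^2)^n) / 2)"
    by (intro summable_divide summable_add)
  show "norm (a n * z ^ n) \<le> ((cmod (a n))\<^sup>2 + ((cmod z)^2)^n) / 2" for n
  proof -
    have "((cmod z)^2)^n = (cmod z ^ n)^2"
      by (simp flip: power_mult add: mult.commute)
    then show ?thesis
      using sum_squares_bound[of "cmod (a n)" "cmod z ^ n"] by (simp add: norm_mult norm_power)
  qed
qed

lemma h2_eval_holomorphic: "a \<in> H2 \<Longrightarrow> h2_eval a holomorphic_on ball 0 1"
  unfolding h2_eval_def
  by (rule power_series_holomorphic) (use H2_summable_power_series in \<open>auto simp: summable_sums\<close>)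

lemma taylor_coeffs_eqI:
  assumes "r > 0" and "\<And>z. z \<in> ball 0 r \<Longrightarrow> (\<lambda>n. b n * z ^ n) sums g z"
  shows "taylor_coeffs g = b"
proof -
  have "eventually (\<lambda>z. z \<in> ball 0 r) (nhds (0::complex))"
    using assms(1) by (intro eventually_nhds_in_open) auto
  then have "g has_fps_expansion Abs_fps b"
    by (intro has_fps_expansionI) (auto elim!: eventually_mono intro: assms(2))
  from fps_nth_fps_expansion[OF this] show ?thesis
    by (auto simp: taylor_coeffs_def)
qed

lemma h2_eval_comp_op:
  assumes "f \<in> H2" and "\<phi> holomorphic_on ball 0 1" and "\<phi> ` ball 0 1 \<subseteq> ball 0 1"
    and "cmod z < 1"
  shows "h2_eval (comp_op \<phi> f) z = h2_eval f (\<phi> z)"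
proof -
  have "(h2_eval f \<circ> \<phi>) holomorphic_on ball 0 1"
    using holomorphic_on_compose_gen[OF assms(2) h2_eval_holomorphic[OF assms(1)] assms(3)] .
  then have "(\<lambda>n. (deriv ^^ n) (\<lambda>z. h2_eval f (\<phi> z)) 0 / fact n * (z - 0)^n)
               sums h2_eval f (\<phi> z)"
    using assms(4) by (intro holomorphic_power_series) (auto simp: o_def)
  then show ?thesis
    by (simp add: comp_op_def taylor_coeffs_def h2_eval_def sums_iff)
qed

lemma h2_inner_unit_vector: "h2_inner (\<lambda>n. if n = k then 1 else 0) h = cnj (h k)"
proof -
  have "(\<lambda>n. (if n = k then 1 else 0) * cnj (h n)) = (\<lambda>n. if n = k then cnj (h k) else 0)"
    by auto
  then show ?thesis
    using sums_single[of k "\<lambda>_. cnj (h k)"] by (simp add: h2_inner_def sums_iff)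
qed

lemma unit_vector_in_H2: "(\<lambda>n. if n = k then (1::complex) else 0) \<in> H2"
proof -
  have "(\<lambda>n. (cmod (if n = k then (1::complex) else 0))\<^sup>2) = (\<lambda>n. if n = k then 1 else 0)"
    by auto
  then show ?thesis
    by (simp add: H2_def)
qed

lemma h2_adjoint_eqI:
  assumes "h \<in> H2" and "\<And>f. f \<in> H2 \<Longrightarrow> h2_inner (T f) g = h2_inner f h"
  shows "h2_adjoint T g = h"
  unfolding h2_adjoint_def
proof (rule the_equality)
  show "h \<in> H2 \<and> (\<forall>f\<in>H2. h2_inner (T f) g = h2_inner f h)"
    using assms by blast
  fix h' assume h': "h' \<in> H2 \<and> (\<forall>f\<in>H2. h2_inner (T f) g = h2_inner f h')"
  show "h' = h"
  proof
    fix k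
    show "h' k = h k"
      using h' assms(2)[OF unit_vector_in_H2[of k]] unit_vector_in_H2[of k]
      by (simp add: h2_inner_unit_vector)
  qed
qed

lemma h2_adjoint_comp_op_kernel:
  assumes "\<phi> holomorphic_on ball 0 1" and "\<phi> ` ball 0 1 \<subseteq> ball 0 1" and "cmod z < 1"
  shows "h2_adjoint (comp_op \<phi>) (kernel z) = kernel (\<phi> z)"
proof (rule h2_adjoint_eqI)
  show "kernel (\<phi> z) \<in> H2"
    using assms(2,3) by (intro kernel_in_H2) force
  show "h2_inner (comp_op \<phi> f) (kernel z) = h2_inner f (kernel (\<phi> z))" if "f \<in> H2" for f
    using h2_eval_comp_op[OF that assms] by (simp add: h2_inner_kernel)
qed

lemma shifted_geometric_power_series_sums:
  fixes a b c z :: complex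
  assumes "cmod (c * z) < 1"
  shows "(\<lambda>n. (if n = 0 then a else b * c ^ (n - 1)) * z ^ n) sums (a + b * z / (1 - c * z))"
proof -
  have "(\<lambda>n. b * z * (c * z) ^ n) sums (b * z * (1 / (1 - c * z)))"
    using geometric_sums[OF assms] by (rule sums_mult)
  then have "(\<lambda>n. (if Suc n = 0 then a else b * c ^ (Suc n - 1)) * z ^ Suc n)
               sums (b * z / (1 - c * z))"
    by (simp add: power_mult_distrib algebra_simps)
  then show ?thesis
    by (subst (asm) sums_Suc_iff) (simp add: add.commute)
qed

lemma shifted_geometric_norm_sq_sums:
  fixes a b c :: complex
  assumes "cmod c < 1"
  shows "(\<lambda>n. (cmod (if n = 0 then a else b * c ^ (n - 1)))\<^sup>2)
           sums (cmod a ^ 2 + cmod b ^ 2 / (1 - cmod c ^ 2))"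
proof -
  have "(\<lambda>n. cmod b ^ 2 * ((cmod c)^2)^n) sums (cmod b ^ 2 * (1 / (1 - (cmod c)^2)))"
    using assms by (intro sums_mult geometric_sums) (simp add: abs_square_less_1)
  then have "(\<lambda>n. (cmod (if Suc n = 0 then a else b * c ^ (Suc n - 1)))\<^sup>2)
               sums (cmod b ^ 2 / (1 - cmod c ^ 2))"
    by (simp add: norm_mult norm_power power_mult_distrib power_mult[symmetric] mult.commute)
  then show ?thesis
    by (subst (asm) sums_Suc_iff) (simp add: add.commute)
qed

lemma h2_eval_kernel: "cmod (cnj w * z) < 1 \<Longrightarrow> h2_eval (kernel w) z = 1 / (1 - cnj w * z)"
  using geometric_sums[of "cnj w * z"]
  by (simp add: h2_eval_def kernel_def power_mult_distrib sums_iff)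

lemma comp_op_alpha_kernel:
  assumes p: "cmod p < 1" and w: "cmod w < 1"
  shows "comp_op (alpha p) (kernel w) =
    (\<lambda>n. if n = 0 then 1 / (1 - cnj w * p)
         else - cnj w * (1 - cnj p * p) / (1 - cnj w * p)^2 * cnj (alpha p w) ^ (n - 1))"
proof -
  \<comment> \<open>\<open>h2_eval (kernel w) (alpha p z) = (1 - cnj p * z) / (d * (1 - c * z))\<close>\<close>
  define d where "d = 1 - cnj w * p"
  define c where "c = cnj (alpha p w)"
  define b where "b = - cnj w * (1 - cnj p * p) / d^2"
  have d: "d \<noteq> 0"
    unfolding d_def using one_minus_cnj_mult_nonzero[OF w p] .
  have "cnj (1 - cnj p * w) = d"
    by (simp add: d_def mult.commute)
  then have c: "c * d = cnj p - cnj w"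
    using d by (auto simp: c_def alpha_def)
  have "- cnj w * (1 - cnj p * p) = (c - cnj p) * d"
    by (simp add: left_diff_distrib c) (simp add: d_def algebra_simps)
  then have b: "b = (c - cnj p) / d"
    unfolding b_def using d by (simp add: power2_eq_square)
  have "taylor_coeffs (\<lambda>z. h2_eval (kernel w) (alpha p z)) = (\<lambda>n. if n = 0 then 1 / d else b * c ^ (n - 1))"
  proof (rule taylor_coeffs_eqI[of 1])
    fix z :: complex assume "z \<in> ball 0 1"
    then have z: "cmod z < 1" by simp
    have cz: "cmod (c * z) < 1"
      unfolding c_def using norm_cnj_mult_less_1[OF _ z, of "alpha p w"] norm_alpha_less_1[OF p w] by simp
    then have cz0: "1 - c * z \<noteq> 0" by auto
    have pz: "1 - cnj p * z \<noteq> 0"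
      using one_minus_cnj_mult_nonzero[OF p z] .
    have "d * (1 - c * z) = d - (cnj p - cnj w) * z"
      by (subst c[symmetric]) (simp add: algebra_simps)
    then have "1 / d + b * z / (1 - c * z) = (1 - cnj p * z) / (d - (cnj p - cnj w) * z)"
      using d cz0 by (simp add: b field_simps)
    also have "\<dots> = 1 / (1 - cnj w * alpha p z)"
      using pz by (simp add: d_def alpha_def field_simps)
    finally have "1 / d + b * z / (1 - c * z) = 1 / (1 - cnj w * alpha p z)" .
    moreover have "h2_eval (kernel w) (alpha p z) = 1 / (1 - cnj w * alpha p z)"
      using norm_cnj_mult_less_1[OF w norm_alpha_less_1[OF p z]] by (rule h2_eval_kernel)
    ultimately show "(\<lambda>n. (if n = 0 then 1 / d else b * c ^ (n - 1)) * z ^ n)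
                       sums h2_eval (kernel w) (alpha p z)"
      using shifted_geometric_power_series_sums[OF cz, of "1 / d" b] by simp
  qed simp
  then show ?thesis
    unfolding comp_op_def b_def c_def d_def .
qed

lemma h2_norm_comp_op_alpha_kernel:
  assumes p: "cmod p < 1" and w: "cmod w < 1"
  shows "h2_norm (comp_op (alpha p) (kernel w))
           = sqrt ((1 - cmod w^2 * cmod p^2) / (cmod (1 - cnj p * w)^2 * (1 - cmod w^2)))"
proof -
  define P W D where "P = cmod p ^ 2" and "W = cmod w ^ 2" and "D = cmod (1 - cnj p * w) ^ 2"
  have P: "0 \<le> P" "P < 1" and W: "W < 1" and D: "D > 0"
    using p w one_minus_cnj_mult_nonzero[OF p w] by (auto simp: P_def W_def D_def abs_square_less_1)
  have "cmod (1 - cnj w * p) = cmod (cnj (1 - cnj p * w))"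
    by (simp add: mult.commute)
  then have denom: "cmod (1 - cnj w * p) ^ 2 = D"
    by (simp only: complex_mod_cnj D_def)
  have pp: "1 - cnj p * p = of_real (1 - P)"
    using complex_norm_square[of p] by (simp add: P_def mult.commute)
  have "cmod (1 - cnj p * p) = 1 - P"
    unfolding pp norm_of_real using P by simp
  then have tail_coeff: "cmod (- cnj w * (1 - cnj p * p) / (1 - cnj w * p)^2) ^ 2 = W * (1 - P)^2 / D^2"
    by (simp add: norm_mult norm_divide norm_power power_divide power_mult_distrib denom
        flip: power_mult W_def)
  have ratio: "1 - cmod (cnj (alpha p w)) ^ 2 = (1 - P) * (1 - W) / D"
    using one_minus_norm_alpha_sq[OF p w] by (simp add: P_def W_def D_def)
  have "1 / D + W * (1 - P)^2 / D^2 / ((1 - P) * (1 - W) / D) = (1 - W * P) / (D * (1 - W))"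
  proof -
    have "1 - P \<noteq> 0" "1 - W \<noteq> 0" "D \<noteq> 0"
      using P W D by auto
    then have "W * (1 - P)^2 / D^2 / ((1 - P) * (1 - W) / D) = W * (1 - P) / (D * (1 - W))"
      by (simp add: power2_eq_square)
    also have "1 / D + \<dots> = (1 - W * P) / (D * (1 - W))"
      using \<open>1 - W \<noteq> 0\<close> \<open>D \<noteq> 0\<close> by (simp add: field_simps)
    finally show ?thesis .
  qed
  moreover have "cmod (1 / (1 - cnj w * p)) ^ 2 = 1 / D"
    by (simp add: norm_divide power_one_over denom)
  moreover have "(\<lambda>n. (cmod (comp_op (alpha p) (kernel w) n))\<^sup>2) sums
      (cmod (1 / (1 - cnj w * p)) ^ 2 +
       cmod (- cnj w * (1 - cnj p * p) / (1 - cnj w * p)^2) ^ 2 / (1 - cmod (cnj (alpha p w)) ^ 2))"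
    unfolding comp_op_alpha_kernel[OF p w]
    using norm_alpha_less_1[OF p w] by (intro shifted_geometric_norm_sq_sums) simp
  ultimately have "(\<lambda>n. (cmod (comp_op (alpha p) (kernel w) n))\<^sup>2) sums ((1 - W * P) / (D * (1 - W)))"
    unfolding tail_coeff ratio by simp
  then show ?thesis
    by (simp add: h2_norm_def sums_iff P_def W_def D_def)
qed

lemma comp_op_alpha_kernel_ratio:
  assumes p: "cmod p < 1" and w: "cmod w < 1"
  shows "h2_norm (comp_op (alpha p) (kernel w)) / h2_norm (kernel w)
           = sqrt ((1 - cmod w^2 * cmod p^2) / cmod (1 - cnj p * w)^2)"
proof -
  have "cmod w ^ 2 < 1" "cmod (1 - cnj p * w) \<noteq> 0"
    using w one_minus_cnj_mult_nonzero[OF p w] by (auto simp: abs_square_less_1)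
  then show ?thesis
    by (simp add: h2_norm_comp_op_alpha_kernel[OF p w] h2_norm_kernel[OF w]
        flip: real_sqrt_divide)
qed

lemma h2_adjoint_comp_op_alpha_kernel_ratio:
  assumes p: "cmod p < 1" and z: "cmod z < 1"
  shows "h2_norm (h2_adjoint (comp_op (alpha p)) (kernel z)) / h2_norm (kernel z)
           = sqrt (cmod (1 - cnj p * z)^2 / (1 - cmod p^2))"
proof -
  have "cmod z ^ 2 < 1" "cmod p ^ 2 < 1" "cmod (1 - cnj p * z) \<noteq> 0"
    using p z one_minus_cnj_mult_nonzero[OF p z] by (auto simp: abs_square_less_1)
  then show ?thesis
    by (simp add: h2_adjoint_comp_op_kernel[OF alpha_holomorphic[OF p] alpha_maps_disc[OF p] z]
        h2_norm_kernel[OF norm_alpha_less_1[OF p z]] h2_norm_kernel[OF z]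
        one_minus_norm_alpha_sq[OF p z] flip: real_sqrt_divide)
qed

lemma h2_adjoint_ratio_le_comp_op_ratio_alpha:
  assumes p: "cmod p < 1" and z: "cmod z < 1"
  shows "h2_norm (h2_adjoint (comp_op (alpha p)) (kernel z)) / h2_norm (kernel z)
           \<le> h2_norm (comp_op (alpha p) (kernel (alpha p z))) / h2_norm (kernel (alpha p z))"
proof -
  define w where "w = alpha p z"
  define P Z N where "P = cmod p ^ 2" and "Z = cmod z ^ 2" and "N = cmod (1 - cnj p * z) ^ 2"
  have P: "0 \<le> P" "P < 1" and Z: "Z < 1" and N: "N > 0"
    using p z one_minus_cnj_mult_nonzero[OF p z] by (auto simp: P_def Z_def N_def abs_square_less_1)
  have P': "cmod (complex_of_real (1 - P)) = 1 - P"
    unfolding norm_of_real using P by simp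
  have "cmod (1 - cnj p * w) = (1 - P) / cmod (1 - cnj p * z)"
    unfolding w_def one_minus_cnj_mult_alpha[OF p z] norm_divide P_def[symmetric] P' ..
  then have pw: "cmod (1 - cnj p * w) ^ 2 = (1 - P)^2 / N"
    by (simp add: N_def power_divide)
  have ww: "cmod w ^ 2 = 1 - (1 - P) * (1 - Z) / N"
    using one_minus_norm_alpha_sq[OF p z] by (simp add: w_def P_def Z_def N_def)
  have "1 - (1 - (1 - P) * (1 - Z) / N) * P = (1 - P) * (N + P * (1 - Z)) / N"
    using N by (simp add: field_simps)
  then have "(1 - cmod w ^ 2 * P) / cmod (1 - cnj p * w) ^ 2 = (N + P * (1 - Z)) / (1 - P)"
    unfolding pw ww using P N by (simp add: power2_eq_square)
  moreover have "N / (1 - P) \<le> (N + P * (1 - Z)) / (1 - P)"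
    using P Z by (intro divide_right_mono) auto
  ultimately have "sqrt (N / (1 - P)) \<le> sqrt ((1 - cmod w ^ 2 * cmod p ^ 2) / cmod (1 - cnj p * w) ^ 2)"
    by (simp add: P_def)
  then show ?thesis
    using norm_alpha_less_1[OF p z]
    by (simp add: h2_adjoint_comp_op_alpha_kernel_ratio[OF p z] comp_op_alpha_kernel_ratio[OF p]
        w_def N_def P_def)
qed

lemma comp_op_ratio_le_adjoint_ratio_opposite:
  assumes p: "cmod p < 1" "p \<noteq> 0" and r: "0 < r" "r < 1"
    and w: "w = - (p / of_real (cmod p)) * of_real r"
  shows "h2_norm (comp_op (alpha p) (kernel w)) / h2_norm (kernel w)
           \<le> h2_norm (h2_adjoint (comp_op (alpha p)) (kernel (- w))) / h2_norm (kernel (- w))"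
proof -
  define s where "s = cmod p"
  have s: "0 < s" "s < 1" and sr: "s * r < 1"
    using p r mult_strict_mono[of s 1 r 1] by (auto simp: s_def)
  have wr: "cmod w = r"
    using s r by (simp add: w norm_mult norm_divide s_def)
  have "cnj p * p = of_real s * of_real s"
    using complex_norm_square[of p] by (simp add: s_def power2_eq_square mult.commute)
  then have "cnj p * w = - of_real (s * r)"
    using s unfolding w by (simp add: field_simps flip: s_def)
  then have e: "1 - cnj p * w = of_real (1 + s * r)" and e': "1 + cnj p * w = of_real (1 - s * r)"
    by simp_all
  have pw: "cmod (1 - cnj p * w) = 1 + s * r" and pw': "cmod (1 + cnj p * w) = 1 - s * r"
    unfolding e e' norm_of_real using s r sr by simp_all
  have "1 - r^2 * s^2 = (1 - s * r) * (1 + s * r)" "1 - s^2 * r^2 = (1 - s * r) * (1 + s * r)"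
    by (simp_all add: algebra_simps power2_eq_square)
  moreover have "1 + s * r \<noteq> 0" "1 - s * r \<noteq> 0"
    using sr mult_pos_pos[OF s(1) r(1)] by auto
  ultimately have "(1 - r^2 * s^2) / (1 + s * r)^2 = (1 - s * r)^2 / (1 - s^2 * r^2)"
    by (simp add: power2_eq_square)
  also have "\<dots> \<le> (1 - s * r)^2 / (1 - s^2)"
    using s r sr
    by (intro divide_left_mono mult_pos_pos)
      (auto simp: mult_le_one power_le_one abs_square_less_1 power_mult_distrib[symmetric])
  finally have "sqrt ((1 - r^2 * s^2) / (1 + s * r)^2) \<le> sqrt ((1 - s * r)^2 / (1 - s^2))"
    by simp
  then show ?thesis
    using wr r
    by (simp add: comp_op_alpha_kernel_ratio[OF p(1)] h2_adjoint_comp_op_alpha_kernel_ratio[OF p(1)]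
        pw pw' s_def)
qed

theorem proposition2p3:
  fixes p :: complex
  assumes "p \<in> ball 0 1" and "p \<noteq> 0"
  shows "(\<forall>r::real. 0 < r \<and> r < 1 \<longrightarrow>
           (let w = - (p / of_real (cmod p)) * of_real r in
              h2_norm (comp_op (alpha p) (kernel w)) / h2_norm (kernel w)
                \<le> h2_norm (h2_adjoint (comp_op (alpha p)) (kernel (- w))) / h2_norm (kernel (- w)))) \<and>
         (\<forall>z\<in>ball 0 1.
           h2_norm (h2_adjoint (comp_op (alpha p)) (kernel z)) / h2_norm (kernel z)
             \<le> h2_norm (comp_op (alpha p) (kernel (alpha p z))) / h2_norm (kernel (alpha p z)))"
proof -
  have p: "cmod p < 1"
    using assms(1) by simp
  show ?thesis
    using comp_op_ratio_le_adjoint_ratio_opposite[OF p assms(2)]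
      h2_adjoint_ratio_le_comp_op_ratio_alpha[OF p]
    by (auto simp: Let_def)
qed

end
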